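(* Let $\Delta t>0$, $N\in\mathbb{N}$, $t_i=i\,\Delta t$, $U\subseteq\mathbb{R}^m$, $f:[0,T]\times\mathbb{R}^n\times U\to\mathbb{R}^n$, $\sigma:[0,T]\times\mathbb{R}^n\to\mathbb{R}^{n\times n}$, $\ell:[0,T]\times\mathbb{R}^n\times U\to\mathbb{R}_+$, $g:\mathbb{R}^n\to\mathbb{R}_+$, and a policy $\mu_i:\mathbb{R}^n\to U$. Under a measure $\widetilde{\mathsf{Q}}$ let $W_0^{\mathsf{Q}},\dots,W_{N-1}^{\mathsf{Q}}$ be mutually independent $\mathcal{N}(0,I_n)$ vectors, $X_0=x_0$, $X_{i+1}=X_i+F^\mu_i+\Sigma_iW^{\mathsf{Q}}_i$ with $F^\mu_i=f(t_i,X_i,\mu_i(X_i))\Delta t$, $\Sigma_i=\sigma(t_i,X_i)\sqrt{\Delta t}$, $L^\mu_j=\ell(t_j,X_j,\mu_j(X_j))\Delta t$, $V^\mu_i(X_i)=\mathbf{E}_{\widetilde{\mathsf{Q}}}[\sum_{j=i}^{N-1}L^\mu_j+g(X_N)\mid X_i]$, $Y_i=V^\mu_i(X_i)$. Fix $i$ and let $\widetilde V_{i+1}:\mathbb{R}^n\to\mathbb{R}$ be $C^2$; define $\overline X_{i+1}=X_i+F^\mu_i$, $\overline Y_{i+1}=\widetilde V_{i+1}(\overline X_{i+1})$, $\overline Z_{i+1}=\Sigma_i^\top\partial_x\widetilde V_{i+1}(\overline X_{i+1})$, $\overline M_{i+1}=\Sigma_i^\top\partial_{xx}\widetilde V_{i+1}(\overline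 X_{i+1})\Sigma_i$, $\widetilde Y_{i+1}=\overline Y_{i+1}+\overline Z_{i+1}^\top W^{\mathsf{Q}}_i+\tfrac12W^{\mathsf{Q}\top}_i\overline M_{i+1}W^{\mathsf{Q}}_i$, $\delta^{\mathrm{h.o.t.}}_{i+1}=\widetilde V_{i+1}(X_{i+1})-\widetilde Y_{i+1}$, $\delta^{\widetilde V}_{i+1}=V^\mu_{i+1}(X_{i+1})-\widetilde V_{i+1}(X_{i+1})$, and $$\Delta\widehat Y_i=-L^\mu_i+\overline Z_{i+1}^\top W^{\mathsf{Q}}_i+\tfrac12\operatorname{tr}\big(\overline M_{i+1}(W^{\mathsf{Q}}_iW^{\mathsf{Q}\top}_i-I)\big).$$ Define the two estimators $\widehat Y^{\mathrm{re\text{-}est}}_i:=\widetilde V_{i+1}(X_{i+1})-\Delta\widehat Y_i$ and $\widehat Y^{\mathrm{noiseless}}_i:=\widetilde Y_{i+1}-\Delta\widehat Y_i$. Then their biases are $$\mathbf{E}_{\widetilde{\mathsf{Q}}}[Y_i-\widehat Y^{\mathrm{re\text{-}est}}_i\mid X_i]=\mathbf{E}_{\widetilde{\mathsf{Q}}}[\delta^{\widetilde V}_{i+1}\mid X_i],\qquad \mathbf{E}_{\widetilde{\mathsf{Q}}}[Y_i-\widehat Y^{\mathrm{noiseless}}_i\mid X_i]=\mathbf{E}_{\widetilde{\mathsf{Q}}}[\delta^{\widetilde V}_{i+1}+\delta^{\mathrm{h.o.t.}}_{i+1}\mid X_i],$$ and their conditional variances are $$\operatorname{Var}_{\widetilde{\mathsf{Q}}}[\widehat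 Y^{\mathrm{re\text{-}est}}_i\mid X_i]=\operatorname{Var}_{\widetilde{\mathsf{Q}}}[\delta^{\mathrm{h.o.t.}}_{i+1}\mid X_i],\qquad \operatorname{Var}_{\widetilde{\mathsf{Q}}}[\widehat Y^{\mathrm{noiseless}}_i\mid X_i]=0.$$
   Context: $T=N\Delta t$; $\partial_x$, $\partial_{xx}$ denote gradient and Hessian. All random variables whose conditional expectations/variances appear are assumed square integrable. $W^{\mathsf{Q}}_i$ is independent of $X_i$. *)

theory Defs
  imports "HOL-Probability.Probability"
begin

primrec state_seq ::
  "(real \<Rightarrow> real^'n \<Rightarrow> real^'m \<Rightarrow> real^'n) \<Rightarrow> (real \<Rightarrow> real^'n \<Rightarrow> real^'n^'n)
   \<Rightarrow> (nat \<Rightarrow> real^'n \<Rightarrow> real^'m) \<Rightarrow> real \<Rightarrow> real^'n \<Rightarrow> (nat \<Rightarrow> 'a \<Rightarrow> real^'n)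
   \<Rightarrow> nat \<Rightarrow> 'a \<Rightarrow> real^'n" where
  "state_seq f \<sigma> \<mu> dt x0 W 0 = (\<lambda>\<omega>. x0)"
| "state_seq f \<sigma> \<mu> dt x0 W (Suc j) = (\<lambda>\<omega>.
     let x = state_seq f \<sigma> \<mu> dt x0 W j \<omega>
     in x + dt *\<^sub>R f (real j * dt) x (\<mu> j x) + (sqrt dt *\<^sub>R \<sigma> (real j * dt) x) *v W j \<omega>)"

definition cond_var :: "'a measure \<Rightarrow> 'a measure \<Rightarrow> ('a \<Rightarrow> real) \<Rightarrow> 'a \<Rightarrow> real" where
  "cond_var M F Z = real_cond_exp M F (\<lambda>\<omega>. (Z \<omega> - real_cond_exp M F Z \<omega>)\<^sup>2)"

definition outer :: "real^'n \<Rightarrow> real^'n \<Rightarrow> real^'n^'n" where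
  "outer u v = (\<chi> a b. u $ a * v $ b)"

definition square_integrable :: "'a measure \<Rightarrow> ('a \<Rightarrow> real) \<Rightarrow> bool" where
  "square_integrable M Z \<longleftrightarrow> Z \<in> borel_measurable M \<and> integrable M (\<lambda>\<omega>. (Z \<omega>)\<^sup>2)"

end

theory Submission
  imports Defs
begin

text \<open>
  Write Y_i = E[S_i | X_i] for the cost-to-go S_i = L_i + S_{i+1}. Since L_i is a function of X_i,
  Y_i = L_i + E[S_{i+1} | X_i]; by the Markov property of the Euler--Maruyama scheme (the noise
  after step i+1 is independent of the noise before it) E[S_{i+1} | W_0, ..., W_i] is a function
  of X_{i+1}, so the tower property gives E[S_{i+1} | X_i] = E[Y_{i+1} | X_i]. As W_i is standard
  Gaussian and independent of X_i, the correction z.W_i + 1/2 tr(M (W_i W_i^T - I)) has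
  conditional mean zero, i.e. E[Delta Y_i | X_i] = -L_i. Together, Y_i = E[Y_{i+1} - Delta Y_i | X_i],
  which gives both bias formulas. By w^T M w = tr(M (w w^T - I)) + tr M, the noiseless estimator
  equals V(Xbar) + L_i + 1/2 tr M, a function of X_i, so its conditional variance vanishes; the
  re-estimated one differs from it by delta^hot.
\<close>

lemma borel_measurable_vec_nth [measurable (raw)]:
  fixes v :: "'a \<Rightarrow> 'b::real_normed_vector^'n"
  assumes "v \<in> borel_measurable M"
  shows "(\<lambda>x. v x $ i) \<in> borel_measurable M"
  using borel_measurable_continuous_on[OF linear_continuous_on[OF bounded_linear_vec_nth] assms] .

lemma borel_measurable_vec_lambda:
  fixes h :: "'a \<Rightarrow> 'n::finite \<Rightarrow> 'b::euclidean_space"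
  assumes "\<And>i. (\<lambda>x. h x i) \<in> borel_measurable M"
  shows "(\<lambda>x. \<chi> i. h x i) \<in> borel_measurable M"
proof (subst borel_measurable_euclidean_space, intro ballI)
  fix b :: "'b^'n" assume "b \<in> Basis"
  then obtain i u where "u \<in> Basis" "b = axis i u" by (auto simp: Basis_vec_def)
  then show "(\<lambda>x. (\<chi> i. h x i) \<bullet> b) \<in> borel_measurable M"
    using assms[of i] by (simp add: inner_axis)
qed

lemma borel_measurable_matrix_vector_mult [measurable (raw)]:
  fixes A :: "'a \<Rightarrow> real^'n^'m" and v :: "'a \<Rightarrow> real^'n"
  assumes [measurable]: "A \<in> borel_measurable M" "v \<in> borel_measurable M"
  shows "(\<lambda>x. A x *v v x) \<in> borel_measurable M"
  unfolding matrix_vector_mult_def by (intro borel_measurable_vec_lambda) measurable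

lemma borel_measurable_matrix_matrix_mult [measurable (raw)]:
  fixes A :: "'a \<Rightarrow> real^'n^'m" and B :: "'a \<Rightarrow> real^'p^'n"
  assumes [measurable]: "A \<in> borel_measurable M" "B \<in> borel_measurable M"
  shows "(\<lambda>x. A x ** B x) \<in> borel_measurable M"
  unfolding matrix_matrix_mult_def by (intro borel_measurable_vec_lambda) measurable

lemma borel_measurable_transpose [measurable (raw)]:
  fixes A :: "'a \<Rightarrow> real^'n^'m"
  assumes [measurable]: "A \<in> borel_measurable M"
  shows "(\<lambda>x. transpose (A x)) \<in> borel_measurable M"
  unfolding transpose_def by (intro borel_measurable_vec_lambda) measurable

lemma borel_measurable_outer [measurable (raw)]:
  fixes u v :: "'a \<Rightarrow> real^'n"
  assumes [measurable]: "u \<in> borel_measurable M" "v \<in> borel_measurable M"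
  shows "(\<lambda>x. outer (u x) (v x)) \<in> borel_measurable M"
  unfolding outer_def by (intro borel_measurable_vec_lambda) measurable

lemma borel_measurable_trace [measurable (raw)]:
  fixes A :: "'a \<Rightarrow> real^'n^'n"
  assumes [measurable]: "A \<in> borel_measurable M"
  shows "(\<lambda>x. trace (A x)) \<in> borel_measurable M"
  unfolding trace_def by measurable

lemma borel_measurable_compose_curried2:
  fixes h :: "'s::second_countable_topology \<Rightarrow> 't::second_countable_topology \<Rightarrow> 'z::topological_space"
  assumes "(\<lambda>(s, t). h s t) \<in> borel_measurable borel"
    and "a \<in> borel_measurable K" "b \<in> borel_measurable K"
  shows "(\<lambda>\<omega>. h (a \<omega>) (b \<omega>)) \<in> borel_measurable K"
  using measurable_compose[OF borel_measurable_Pair[OF assms(2,3)] assms(1)] by simp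

lemma borel_measurable_compose_curried3:
  fixes h :: "'s::second_countable_topology \<Rightarrow> 't::second_countable_topology \<Rightarrow>
      'u::second_countable_topology \<Rightarrow> 'z::topological_space"
  assumes "(\<lambda>(s, t, u). h s t u) \<in> borel_measurable borel"
    and "a \<in> borel_measurable K" "b \<in> borel_measurable K" "c \<in> borel_measurable K"
  shows "(\<lambda>\<omega>. h (a \<omega>) (b \<omega>) (c \<omega>)) \<in> borel_measurable K"
  using measurable_compose[OF borel_measurable_Pair[OF assms(2) borel_measurable_Pair[OF assms(3,4)]] assms(1)]
  by simp

lemma borel_measurable_has_derivative:
  fixes f :: "'a::euclidean_space \<Rightarrow> 'b::euclidean_space"
  assumes "\<And>x. (f has_derivative f' x) (at x)"
  shows "f \<in> borel_measurable borel"
  using assms has_derivative_continuous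
  by (intro borel_measurable_continuous_onI continuous_at_imp_continuous_on) blast

lemma inner_matrix_vector_mult_eq_trace_outer:
  fixes A :: "real^'n^'n" and w :: "real^'n"
  shows "w \<bullet> (A *v w) = trace (A ** (outer w w - mat 1)) + trace A"
proof -
  have "trace (A ** (outer w w - mat 1)) = (\<Sum>a\<in>UNIV. \<Sum>b\<in>UNIV. A $ a $ b * w $ b * w $ a) - trace A"
    by (simp add: trace_def matrix_matrix_mult_def outer_def mat_def algebra_simps
        sum_subtractf if_distrib[of "\<lambda>t. _ * t"] cong: if_cong)
  also have "(\<Sum>a\<in>UNIV. \<Sum>b\<in>UNIV. A $ a $ b * w $ b * w $ a) = w \<bullet> (A *v w)"
    by (simp add: inner_vec_def matrix_vector_mult_def sum_distrib_left mult_ac)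
  finally show ?thesis by simp
qed

lemma (in prob_space) std_normal_moments:
  assumes Z: "distributed M lborel Z (\<lambda>x. ennreal (std_normal_density x))"
  shows "integrable M Z" "expectation Z = 0"
    and "integrable M (\<lambda>\<omega>. (Z \<omega>)\<^sup>2)" "expectation (\<lambda>\<omega>. (Z \<omega>)\<^sup>2) = 1"
proof -
  show "integrable M Z"
    using distributed_integrable[OF Z, of "\<lambda>x. x"] integrable_std_normal_moment[of 1] by simp
  show "expectation Z = 0"
    using standard_normal_distributed_expectation[OF Z] .
  show "integrable M (\<lambda>\<omega>. (Z \<omega>)\<^sup>2)"
    using distributed_integrable[OF Z, of "\<lambda>x. x\<^sup>2"] integrable_std_normal_moment[of 2] by simp
  show "expectation (\<lambda>\<omega>. (Z \<omega>)\<^sup>2) = 1"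
    using distributed_integral[OF Z, of "\<lambda>x. x\<^sup>2"] integral_std_normal_moment_even[of 1] by simp
qed

lemma (in prob_space) std_normal_vector_second_moments:
  fixes W :: "'a \<Rightarrow> real^'n"
  assumes indep: "indep_vars (\<lambda>_. borel) (\<lambda>k \<omega>. W \<omega> $ k) UNIV"
    and std: "\<And>k. distributed M lborel (\<lambda>\<omega>. W \<omega> $ k) (\<lambda>x. ennreal (std_normal_density x))"
  shows "integrable M (\<lambda>\<omega>. W \<omega> $ a * W \<omega> $ b)"
    and "expectation (\<lambda>\<omega>. W \<omega> $ a * W \<omega> $ b) = (if a = b then 1 else 0)"
proof -
  let ?ab = "\<lambda>\<omega>. W \<omega> $ a * W \<omega> $ b"
  note moments = std_normal_moments[OF std]
  have "integrable M ?ab \<and> expectation ?ab = (if a = b then 1 else 0)"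
  proof (cases "a = b")
    case True
    then show ?thesis using moments(3,4)[of a] by (simp add: power2_eq_square)
  next
    case False
    have "indep_var (PiM {a} (\<lambda>_. borel)) (\<lambda>\<omega>. restrict (\<lambda>k. W \<omega> $ k) {a})
        (PiM {b} (\<lambda>_. borel)) (\<lambda>\<omega>. restrict (\<lambda>k. W \<omega> $ k) {b})"
      using False by (intro indep_var_restrict[OF indep]) auto
    from indep_var_compose[OF this measurable_component_singleton measurable_component_singleton]
    have indep_ab: "indep_var borel (\<lambda>\<omega>. W \<omega> $ a) borel (\<lambda>\<omega>. W \<omega> $ b)"
      by (simp add: comp_def)
    from False show ?thesis
      using indep_var_integrable[OF indep_ab moments(1,1)] indep_var_lebesgue_integral[OF indep_ab moments(1,1)]
      by (simp add: moments(2))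
  qed
  then show "integrable M ?ab" "expectation ?ab = (if a = b then 1 else 0)" by auto
qed

lemma (in prob_space) std_normal_vector_inner:
  fixes W :: "'a \<Rightarrow> real^'n"
  assumes std: "\<And>k. distributed M lborel (\<lambda>\<omega>. W \<omega> $ k) (\<lambda>x. ennreal (std_normal_density x))"
  shows "integrable M (\<lambda>\<omega>. z \<bullet> W \<omega>)" "expectation (\<lambda>\<omega>. z \<bullet> W \<omega>) = 0"
  using std_normal_moments(1,2)[OF std] by (simp_all add: inner_vec_def)

lemma (in prob_space) std_normal_vector_trace_outer:
  fixes W :: "'a \<Rightarrow> real^'n"
  assumes indep: "indep_vars (\<lambda>_. borel) (\<lambda>k \<omega>. W \<omega> $ k) UNIV"
    and std: "\<And>k. distributed M lborel (\<lambda>\<omega>. W \<omega> $ k) (\<lambda>x. ennreal (std_normal_density x))"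
  shows "integrable M (\<lambda>\<omega>. trace (A ** (outer (W \<omega>) (W \<omega>) - mat 1)))"
    and "expectation (\<lambda>\<omega>. trace (A ** (outer (W \<omega>) (W \<omega>) - mat 1))) = 0"
proof -
  note moments = std_normal_vector_second_moments[OF indep std]
  have trace_eq: "trace (A ** (outer w w - mat 1)) =
      (\<Sum>a\<in>UNIV. \<Sum>b\<in>UNIV. A $ a $ b * (w $ b * w $ a - (if b = a then 1 else 0)))" for w :: "real^'n"
    by (simp add: trace_def matrix_matrix_mult_def outer_def mat_def)
  show "integrable M (\<lambda>\<omega>. trace (A ** (outer (W \<omega>) (W \<omega>) - mat 1)))"
    unfolding trace_eq using moments(1) by simp
  show "expectation (\<lambda>\<omega>. trace (A ** (outer (W \<omega>) (W \<omega>) - mat 1))) = 0"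
    unfolding trace_eq using moments by (simp add: prob_space)
qed

lemma (in prob_space) indep_var_integral_iterated:
  fixes h :: "'x \<times> 'x \<Rightarrow> real"
  assumes indep: "indep_var S X T Y" and [measurable]: "h \<in> borel_measurable (S \<Otimes>\<^sub>M T)"
    and int: "integrable M (\<lambda>\<omega>. h (X \<omega>, Y \<omega>))"
  shows "(\<lambda>x. \<integral>\<omega>'. h (x, Y \<omega>') \<partial>M) \<in> borel_measurable S"
    and "integrable M (\<lambda>\<omega>. \<integral>\<omega>'. h (X \<omega>, Y \<omega>') \<partial>M)"
    and "(\<integral>\<omega>. h (X \<omega>, Y \<omega>) \<partial>M) = (\<integral>\<omega>. (\<integral>\<omega>'. h (X \<omega>, Y \<omega>') \<partial>M) \<partial>M)"
proof -
  have [measurable]: "random_variable S X" "random_variable T Y"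
    and joint: "distr M S X \<Otimes>\<^sub>M distr M T Y = distr M (S \<Otimes>\<^sub>M T) (\<lambda>\<omega>. (X \<omega>, Y \<omega>))"
    using indep unfolding indep_var_distribution_eq by auto
  interpret SX: prob_space "distr M S X" by (rule prob_space_distr) simp
  interpret TY: prob_space "distr M T Y" by (rule prob_space_distr) simp
  interpret pair_prob_space "distr M S X" "distr M T Y" ..
  have int_joint: "integrable (distr M S X \<Otimes>\<^sub>M distr M T Y) h"
    unfolding joint by (subst integrable_distr_eq) (auto simp: int)
  have inner: "(\<integral>y. h (x, y) \<partial>distr M T Y) = (\<integral>\<omega>'. h (x, Y \<omega>') \<partial>M)" if "x \<in> space S" for x
    using that by (subst integral_distr) auto
  have "(\<lambda>x. \<integral>y. h (x, y) \<partial>distr M T Y) \<in> borel_measurable S"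
    using TY.borel_measurable_lebesgue_integral[of "\<lambda>x y. h (x, y)" S] by simp
  then show meas: "(\<lambda>x. \<integral>\<omega>'. h (x, Y \<omega>') \<partial>M) \<in> borel_measurable S"
    by (rule measurable_cong[THEN iffD1, rotated]) (simp add: inner)
  have "integrable (distr M S X) (\<lambda>x. \<integral>y. h (x, y) \<partial>distr M T Y)"
    by (rule integrable_fst'[OF int_joint])
  then have "integrable (distr M S X) (\<lambda>x. \<integral>\<omega>'. h (x, Y \<omega>') \<partial>M)"
    by (rule Bochner_Integration.integrable_cong[THEN iffD1, rotated 2]) (auto simp: inner)
  then show "integrable M (\<lambda>\<omega>. \<integral>\<omega>'. h (X \<omega>, Y \<omega>') \<partial>M)"
    using meas by (subst (asm) integrable_distr_eq) auto
  have "(\<integral>\<omega>. h (X \<omega>, Y \<omega>) \<partial>M) = integral\<^sup>L (distr M S X \<Otimes>\<^sub>M distr M T Y) h"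
    unfolding joint by (subst integral_distr) auto
  also have "\<dots> = (\<integral>x. (\<integral>y. h (x, y) \<partial>distr M T Y) \<partial>distr M S X)"
    by (rule integral_fst'[OF int_joint, symmetric])
  also have "\<dots> = (\<integral>x. (\<integral>\<omega>'. h (x, Y \<omega>') \<partial>M) \<partial>distr M S X)"
    by (rule Bochner_Integration.integral_cong) (auto simp: inner)
  also have "\<dots> = (\<integral>\<omega>. (\<integral>\<omega>'. h (X \<omega>, Y \<omega>') \<partial>M) \<partial>M)"
    using meas by (subst integral_distr) auto
  finally show "(\<integral>\<omega>. h (X \<omega>, Y \<omega>) \<partial>M) = (\<integral>\<omega>. (\<integral>\<omega>'. h (X \<omega>, Y \<omega>') \<partial>M) \<partial>M)" .
qed

lemma subalgebra_vimage_algebra: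
  "X \<in> measurable M S \<Longrightarrow> subalgebra M (vimage_algebra (space M) X S)"
  using sets_image_in_sets[OF refl] unfolding subalgebra_def by auto

lemma (in finite_measure) sigma_finite_subalgebra_vimage_algebra:
  assumes "X \<in> measurable M S"
  shows "sigma_finite_subalgebra M (vimage_algebra (space M) X S)"
  by (rule finite_measure_subalgebra_is_sigma_finite)
     (simp add: finite_measure_subalgebra_def finite_measure_subalgebra_axioms_def
       subalgebra_vimage_algebra[OF assms] finite_measure_axioms)

lemma (in prob_space) real_cond_exp_indep_freeze:
  fixes h :: "'x \<times> 'x \<Rightarrow> real"
  assumes indep: "indep_var S X T Y" and h_meas [measurable]: "h \<in> borel_measurable (S \<Otimes>\<^sub>M T)"
    and int: "integrable M (\<lambda>\<omega>. h (X \<omega>, Y \<omega>))"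
  shows "AE \<omega> in M. real_cond_exp M (vimage_algebra (space M) X S) (\<lambda>\<omega>. h (X \<omega>, Y \<omega>)) \<omega>
           = (\<integral>\<omega>'. h (X \<omega>, Y \<omega>') \<partial>M)"
proof -
  have X_meas [measurable]: "random_variable S X" and [measurable]: "random_variable T Y"
    using indep unfolding indep_var_distribution_eq by auto
  define F where "F = vimage_algebra (space M) X S"
  interpret sigma_finite_subalgebra M F
    unfolding F_def by (rule sigma_finite_subalgebra_vimage_algebra) simp
  note iterated = indep_var_integral_iterated[OF indep h_meas int]
  have "X \<in> measurable F S"
    unfolding F_def by (rule measurable_vimage_algebra1) (use X_meas in \<open>auto simp: measurable_def\<close>)
  from measurable_comp[OF this iterated(1)]
  have frozen_F: "(\<lambda>\<omega>. \<integral>\<omega>'. h (X \<omega>, Y \<omega>') \<partial>M) \<in> borel_measurable F"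
    by (simp add: comp_def)
  show ?thesis unfolding F_def[symmetric]
  proof (rule real_cond_exp_charact[OF _ int iterated(2) frozen_F])
    fix A assume "A \<in> sets F"
    then obtain E where [measurable]: "E \<in> sets S" and A: "A = X -` E \<inter> space M"
      unfolding F_def using sets_vimage_algebra2[of X "space M" S] X_meas
      by (auto simp: measurable_def)
    have [measurable]: "A \<in> sets M" unfolding A by measurable
    define hE where "hE = (\<lambda>(x, y). indicator E x * h (x, y))"
    have hE_meas: "hE \<in> borel_measurable (S \<Otimes>\<^sub>M T)" unfolding hE_def by measurable
    have hE_eq: "hE (X \<omega>, y) = indicator A \<omega> * h (X \<omega>, y)" if "\<omega> \<in> space M" for \<omega> y
      using that by (auto simp: hE_def A indicator_def)
    have "integrable M (\<lambda>\<omega>. hE (X \<omega>, Y \<omega>))"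
      using integrable_mult_indicator[OF _ int, of A] by (simp add: hE_eq cong: Bochner_Integration.integrable_cong)
    note iteratedE = indep_var_integral_iterated(3)[OF indep hE_meas this]
    have "(\<integral>\<omega>\<in>A. h (X \<omega>, Y \<omega>) \<partial>M) = (\<integral>\<omega>. hE (X \<omega>, Y \<omega>) \<partial>M)"
      unfolding set_lebesgue_integral_def by (rule Bochner_Integration.integral_cong) (auto simp: hE_eq)
    also have "\<dots> = (\<integral>\<omega>. (\<integral>\<omega>'. hE (X \<omega>, Y \<omega>') \<partial>M) \<partial>M)"
      by (rule iteratedE)
    also have "\<dots> = (\<integral>\<omega>\<in>A. (\<integral>\<omega>'. h (X \<omega>, Y \<omega>') \<partial>M) \<partial>M)"
      unfolding set_lebesgue_integral_def by (rule Bochner_Integration.integral_cong) (auto simp: hE_eq)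
    finally show "(\<integral>\<omega>\<in>A. h (X \<omega>, Y \<omega>) \<partial>M) = (\<integral>\<omega>\<in>A. (\<integral>\<omega>'. h (X \<omega>, Y \<omega>') \<partial>M) \<partial>M)" .
  qed
qed

lemma (in sigma_finite_subalgebra) cond_var_F_meas:
  assumes "integrable M Z" "Z \<in> borel_measurable F"
  shows "AE \<omega> in M. cond_var M F Z \<omega> = 0"
proof -
  have Z_meas [measurable]: "Z \<in> borel_measurable M" using assms(1) by simp
  have "AE \<omega> in M. real_cond_exp M F (\<lambda>\<omega>. (Z \<omega> - real_cond_exp M F Z \<omega>)\<^sup>2) \<omega> = real_cond_exp M F (\<lambda>_. 0) \<omega>"
    using real_cond_exp_F_meas[OF assms]
    by (intro real_cond_exp_cong) (auto intro: borel_measurable_cond_exp2)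
  moreover have "AE \<omega> in M. real_cond_exp M F (\<lambda>_. 0) \<omega> = 0"
    by (rule real_cond_exp_F_meas) auto
  ultimately show ?thesis unfolding cond_var_def by eventually_elim simp
qed

lemma (in sigma_finite_subalgebra) cond_var_add_F_meas:
  assumes "integrable M Z" "integrable M H" "H \<in> borel_measurable F"
  shows "AE \<omega> in M. cond_var M F (\<lambda>\<omega>. Z \<omega> + H \<omega>) \<omega> = cond_var M F Z \<omega>"
proof -
  have [measurable]: "Z \<in> borel_measurable M" "H \<in> borel_measurable M" using assms(1,2) by simp_all
  have "AE \<omega> in M. real_cond_exp M F (\<lambda>\<omega>. Z \<omega> + H \<omega>) \<omega> = real_cond_exp M F Z \<omega> + H \<omega>"
    using real_cond_exp_add[OF assms(1,2)] real_cond_exp_F_meas[OF assms(2,3)] by eventually_elim simp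
  then have "AE \<omega> in M. (Z \<omega> + H \<omega> - real_cond_exp M F (\<lambda>\<omega>. Z \<omega> + H \<omega>) \<omega>)\<^sup>2 = (Z \<omega> - real_cond_exp M F Z \<omega>)\<^sup>2"
    by eventually_elim simp
  then show ?thesis
    unfolding cond_var_def by (rule real_cond_exp_cong) (auto intro: borel_measurable_cond_exp2)
qed

lemma (in finite_measure) square_integrable_imp_integrable:
  assumes "square_integrable M Z"
  shows "integrable M Z"
proof -
  have [measurable]: "Z \<in> borel_measurable M" and sq: "integrable M (\<lambda>\<omega>. (Z \<omega>)\<^sup>2)"
    using assms unfolding square_integrable_def by auto
  have abs_le: "\<bar>t\<bar> \<le> 1 + t\<^sup>2" for t :: real
  proof -
    have "0 \<le> (\<bar>t\<bar> - 1)\<^sup>2" by simp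
    then show ?thesis by (simp add: power2_eq_square algebra_simps)
  qed
  show ?thesis
    by (rule Bochner_Integration.integrable_bound[of _ "\<lambda>\<omega>. 1 + (Z \<omega>)\<^sup>2"]) (use sq abs_le in auto)
qed

text \<open>Y, Y', V, Ytil and D play the roles of Y_i, Y_{i+1}, V_{i+1}(X_{i+1}), Ytil_{i+1} and
  Delta Y_i, so that V - D and Ytil - D are the re-estimated and the noiseless estimator.\<close>
lemma (in sigma_finite_subalgebra) estimator_bias_variance:
  assumes Y_F: "Y \<in> borel_measurable F"
    and int: "integrable M Y" "integrable M Y'" "integrable M V" "integrable M Ytil" "integrable M D"
    and backward: "AE \<omega> in M. Y \<omega> = real_cond_exp M F (\<lambda>\<omega>. Y' \<omega> - D \<omega>) \<omega>"
    and noiseless_F: "(\<lambda>\<omega>. Ytil \<omega> - D \<omega>) \<in> borel_measurable F"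
  shows "AE \<omega> in M. real_cond_exp M F (\<lambda>\<omega>. Y \<omega> - (V \<omega> - D \<omega>)) \<omega>
                  = real_cond_exp M F (\<lambda>\<omega>. Y' \<omega> - V \<omega>) \<omega>"
    and "AE \<omega> in M. real_cond_exp M F (\<lambda>\<omega>. Y \<omega> - (Ytil \<omega> - D \<omega>)) \<omega>
                  = real_cond_exp M F (\<lambda>\<omega>. (Y' \<omega> - V \<omega>) + (V \<omega> - Ytil \<omega>)) \<omega>"
    and "AE \<omega> in M. cond_var M F (\<lambda>\<omega>. V \<omega> - D \<omega>) \<omega> = cond_var M F (\<lambda>\<omega>. V \<omega> - Ytil \<omega>) \<omega>"
    and "AE \<omega> in M. cond_var M F (\<lambda>\<omega>. Ytil \<omega> - D \<omega>) \<omega> = 0"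
proof -
  define K where "K \<omega> = Y \<omega> - (Y' \<omega> - D \<omega>)" for \<omega>
  have int_K: "integrable M K" unfolding K_def using int by simp
  have "integrable M (\<lambda>\<omega>. Y' \<omega> - D \<omega>)" using int by simp
  from real_cond_exp_diff[OF int(1) this] real_cond_exp_F_meas[OF int(1) Y_F] backward
  have "AE \<omega> in M. real_cond_exp M F K \<omega> = 0"
    unfolding K_def by eventually_elim simp
  then have unbiased: "AE \<omega> in M. real_cond_exp M F (\<lambda>\<omega>. Z \<omega> + K \<omega>) \<omega> = real_cond_exp M F Z \<omega>"
    if "integrable M Z" for Z
    using real_cond_exp_add[OF that int_K] by eventually_elim simp
  show "AE \<omega> in M. real_cond_exp M F (\<lambda>\<omega>. Y \<omega> - (V \<omega> - D \<omega>)) \<omega>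
                  = real_cond_exp M F (\<lambda>\<omega>. Y' \<omega> - V \<omega>) \<omega>"
    using unbiased[of "\<lambda>\<omega>. Y' \<omega> - V \<omega>"] int unfolding K_def by (simp add: algebra_simps)
  show "AE \<omega> in M. real_cond_exp M F (\<lambda>\<omega>. Y \<omega> - (Ytil \<omega> - D \<omega>)) \<omega>
                  = real_cond_exp M F (\<lambda>\<omega>. (Y' \<omega> - V \<omega>) + (V \<omega> - Ytil \<omega>)) \<omega>"
    using unbiased[of "\<lambda>\<omega>. (Y' \<omega> - V \<omega>) + (V \<omega> - Ytil \<omega>)"] int unfolding K_def
    by (simp add: algebra_simps)
  show "AE \<omega> in M. cond_var M F (\<lambda>\<omega>. V \<omega> - D \<omega>) \<omega> = cond_var M F (\<lambda>\<omega>. V \<omega> - Ytil \<omega>) \<omega>"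
    using cond_var_add_F_meas[of "\<lambda>\<omega>. V \<omega> - Ytil \<omega>" "\<lambda>\<omega>. Ytil \<omega> - D \<omega>"] int noiseless_F
    by simp
  show "AE \<omega> in M. cond_var M F (\<lambda>\<omega>. Ytil \<omega> - D \<omega>) \<omega> = 0"
    using cond_var_F_meas[OF _ noiseless_F] int by simp
qed

primrec em_path ::
  "(real \<Rightarrow> real^'n \<Rightarrow> real^'m \<Rightarrow> real^'n) \<Rightarrow> (real \<Rightarrow> real^'n \<Rightarrow> real^'n^'n)
   \<Rightarrow> (nat \<Rightarrow> real^'n \<Rightarrow> real^'m) \<Rightarrow> real \<Rightarrow> nat \<Rightarrow> real^'n \<Rightarrow> (nat \<Rightarrow> real^'n) \<Rightarrow> nat \<Rightarrow> real^'n"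
where
  "em_path f \<sigma> \<mu> dt t0 x w 0 = x"
| "em_path f \<sigma> \<mu> dt t0 x w (Suc m) =
     (let y = em_path f \<sigma> \<mu> dt t0 x w m; k = t0 + m
      in y + dt *\<^sub>R f (real k * dt) y (\<mu> k y) + (sqrt dt *\<^sub>R \<sigma> (real k * dt) y) *v w k)"

lemma state_seq_eq_em_path: "state_seq f \<sigma> \<mu> dt x0 W j \<omega> = em_path f \<sigma> \<mu> dt 0 x0 (\<lambda>k. W k \<omega>) j"
  by (induction j) (simp_all add: Let_def)

lemma em_path_add:
  "em_path f \<sigma> \<mu> dt t0 x w (m + n) = em_path f \<sigma> \<mu> dt (t0 + m) (em_path f \<sigma> \<mu> dt t0 x w m) w n"
  by (induction n) (simp_all add: Let_def add.assoc)

lemma em_path_cong: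
  assumes "\<And>k. t0 \<le> k \<Longrightarrow> k < t0 + m \<Longrightarrow> w k = w' k"
  shows "em_path f \<sigma> \<mu> dt t0 x w m = em_path f \<sigma> \<mu> dt t0 x w' m"
  using assms by (induction m) (simp_all add: Let_def)

locale euler_maruyama = prob_space M
  for M :: "'a measure"
    and f :: "real \<Rightarrow> real^'n \<Rightarrow> real^'m \<Rightarrow> real^'n"
    and \<sigma> :: "real \<Rightarrow> real^'n \<Rightarrow> real^'n^'n"
    and \<mu> :: "nat \<Rightarrow> real^'n \<Rightarrow> real^'m"
    and dt :: real and x0 :: "real^'n" and W :: "nat \<Rightarrow> 'a \<Rightarrow> real^'n" and N :: nat +
  assumes f_measurable: "(\<lambda>(t, x, u). f t x u) \<in> borel_measurable borel"
    and \<sigma>_measurable: "(\<lambda>(t, x). \<sigma> t x) \<in> borel_measurable borel"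
    and \<mu>_measurable [measurable]: "\<And>j. \<mu> j \<in> borel_measurable borel"
    and noise_indep: "indep_vars (\<lambda>_. borel) W {..<N}"
begin

abbreviation state :: "nat \<Rightarrow> 'a \<Rightarrow> real^'n" where
  "state \<equiv> state_seq f \<sigma> \<mu> dt x0 W"

abbreviation state_algebra :: "nat \<Rightarrow> 'a measure" where
  "state_algebra j \<equiv> vimage_algebra (space M) (state j) borel"

abbreviation past_noise :: "nat \<Rightarrow> 'a \<Rightarrow> nat \<Rightarrow> real^'n" where
  "past_noise j \<omega> \<equiv> restrict (\<lambda>k. W k \<omega>) {..<j}"

abbreviation past_noise_algebra :: "nat \<Rightarrow> 'a measure" where
  "past_noise_algebra j \<equiv> vimage_algebra (space M) (past_noise j) (PiM {..<j} (\<lambda>_. borel))"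

abbreviation future_noise :: "nat \<Rightarrow> 'a \<Rightarrow> nat \<Rightarrow> real^'n" where
  "future_noise j \<omega> \<equiv> restrict (\<lambda>k. W k \<omega>) {j..<N}"

abbreviation cost_to_go :: "(nat \<Rightarrow> real^'n \<Rightarrow> real) \<Rightarrow> (real^'n \<Rightarrow> real) \<Rightarrow> nat \<Rightarrow> 'a \<Rightarrow> real" where
  "cost_to_go c g j \<omega> \<equiv> (\<Sum>k\<in>{j..<N}. c k (state k \<omega>)) + g (state N \<omega>)"

lemmas f_compose_measurable [measurable (raw)] = borel_measurable_compose_curried3[OF f_measurable]
lemmas \<sigma>_compose_measurable [measurable (raw)] = borel_measurable_compose_curried2[OF \<sigma>_measurable]

lemma em_path_measurable:
  assumes "x \<in> borel_measurable K"
    and "\<And>k. t0 \<le> k \<Longrightarrow> k < t0 + m \<Longrightarrow> (\<lambda>\<omega>. w \<omega> k) \<in> borel_measurable K"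
  shows "(\<lambda>\<omega>. em_path f \<sigma> \<mu> dt t0 (x \<omega>) (w \<omega>) m) \<in> borel_measurable K"
  using assms(2)
proof (induction m)
  case 0
  then show ?case using assms(1) by simp
next
  case (Suc m)
  have [measurable]: "(\<lambda>\<omega>. em_path f \<sigma> \<mu> dt t0 (x \<omega>) (w \<omega>) m) \<in> borel_measurable K"
    "(\<lambda>\<omega>. w \<omega> (t0 + m)) \<in> borel_measurable K"
    using Suc by auto
  show ?case unfolding em_path.simps Let_def by measurable
qed

lemma noise_measurable: "j < N \<Longrightarrow> W j \<in> borel_measurable M"
  using noise_indep unfolding indep_vars_def by auto

lemma past_noise_measurable: "j \<le> N \<Longrightarrow> past_noise j \<in> measurable M (PiM {..<j} (\<lambda>_. borel))"
  using noise_measurable by (intro measurable_restrict) auto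

lemma state_eq_em_path_past: "k \<le> j \<Longrightarrow> state k \<omega> = em_path f \<sigma> \<mu> dt 0 x0 (past_noise j \<omega>) k"
  unfolding state_seq_eq_em_path by (rule em_path_cong) auto

lemma em_path_past_measurable:
  "k \<le> j \<Longrightarrow> (\<lambda>w. em_path f \<sigma> \<mu> dt 0 x0 w k) \<in> borel_measurable (PiM {..<j} (\<lambda>_. borel))"
  by (rule em_path_measurable) auto

lemma state_measurable: "j \<le> N \<Longrightarrow> state j \<in> borel_measurable M"
  unfolding state_seq_eq_em_path using noise_measurable
  by (intro em_path_measurable[where w="\<lambda>\<omega> k. W k \<omega>", simplified]) auto

lemma state_measurable_past_noise_algebra:
  assumes "k \<le> j" "j \<le> N"
  shows "state k \<in> borel_measurable (past_noise_algebra j)"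
proof -
  have "past_noise j \<in> measurable (past_noise_algebra j) (PiM {..<j} (\<lambda>_. borel))"
    by (rule measurable_vimage_algebra1) (use past_noise_measurable[OF assms(2)] in \<open>auto simp: measurable_def\<close>)
  from measurable_comp[OF this em_path_past_measurable[OF assms(1)]] show ?thesis
    by (simp add: comp_def state_eq_em_path_past[OF assms(1), symmetric])
qed

lemma sigma_finite_subalgebra_state_algebra: "j \<le> N \<Longrightarrow> sigma_finite_subalgebra M (state_algebra j)"
  by (rule sigma_finite_subalgebra_vimage_algebra) (rule state_measurable)

lemma measurable_state_algebra:
  assumes "j \<le> N" "\<psi> \<in> borel_measurable borel"
  shows "(\<lambda>\<omega>. \<psi> (state j \<omega>)) \<in> borel_measurable (state_algebra j)"
proof -
  have "state j \<in> borel_measurable (state_algebra j)"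
    by (rule measurable_vimage_algebra1) (use state_measurable[OF assms(1)] in \<open>auto simp: measurable_def\<close>)
  from measurable_comp[OF this assms(2)] show ?thesis by (simp add: comp_def)
qed

lemma indep_state_noise:
  assumes "i < N"
  shows "indep_var borel (state i) borel (W i)"
proof -
  have "indep_var (PiM {..<i} (\<lambda>_. borel)) (past_noise i) (PiM {i} (\<lambda>_. borel)) (\<lambda>\<omega>. restrict (\<lambda>k. W k \<omega>) {i})"
    using assms by (intro indep_var_restrict[OF noise_indep]) auto
  from indep_var_compose[OF this em_path_past_measurable[OF order_refl] measurable_component_singleton]
  show ?thesis by (simp add: comp_def state_eq_em_path_past[OF order_refl, symmetric])
qed

lemma cond_exp_ito_correction:
  fixes z :: "real^'n \<Rightarrow> real^'n" and A :: "real^'n \<Rightarrow> real^'n^'n"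
  assumes "i < N" and [measurable]: "z \<in> borel_measurable borel" "A \<in> borel_measurable borel"
    and indep: "indep_vars (\<lambda>_. borel) (\<lambda>k \<omega>. W i \<omega> $ k) UNIV"
    and std: "\<And>k. distributed M lborel (\<lambda>\<omega>. W i \<omega> $ k) (\<lambda>x. ennreal (std_normal_density x))"
    and int: "integrable M (\<lambda>\<omega>. z (state i \<omega>) \<bullet> W i \<omega>
                + 1/2 * trace (A (state i \<omega>) ** (outer (W i \<omega>) (W i \<omega>) - mat 1)))"
  shows "AE \<omega> in M. real_cond_exp M (state_algebra i) (\<lambda>\<omega>. z (state i \<omega>) \<bullet> W i \<omega>
                + 1/2 * trace (A (state i \<omega>) ** (outer (W i \<omega>) (W i \<omega>) - mat 1))) \<omega> = 0"
proof -
  define h where "h = (\<lambda>(x, w). z x \<bullet> w + 1/2 * trace (A x ** (outer w w - mat 1)))"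
  have h_meas: "h \<in> borel_measurable (borel \<Otimes>\<^sub>M borel)" unfolding h_def by measurable
  have "(\<integral>\<omega>'. h (x, W i \<omega>') \<partial>M) = 0" for x
    using std_normal_vector_inner[OF std, of "z x"] std_normal_vector_trace_outer[OF indep std, of "A x"]
    by (simp add: h_def)
  with real_cond_exp_indep_freeze[OF indep_state_noise[OF \<open>i < N\<close>] h_meas] int
  show ?thesis by (simp add: h_def)
qed

lemma cost_to_go_future:
  assumes "j \<le> N" and [measurable]: "\<And>k. c k \<in> borel_measurable borel" "g \<in> borel_measurable borel"
  obtains \<Psi> where "\<Psi> \<in> borel_measurable (borel \<Otimes>\<^sub>M PiM {j..<N} (\<lambda>_. borel))"
    and "\<And>\<omega>. cost_to_go c g j \<omega> = \<Psi> (state j \<omega>, future_noise j \<omega>)"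
proof -
  define T where "T m p = em_path f \<sigma> \<mu> dt j (fst p) (snd p) m"
    for m and p :: "(real^'n) \<times> (nat \<Rightarrow> real^'n)"
  have T_meas: "T m \<in> borel_measurable (borel \<Otimes>\<^sub>M PiM {j..<N} (\<lambda>_. borel))" if "m \<le> N - j" for m
    unfolding T_def using that by (intro em_path_measurable) auto
  define \<Psi> where "\<Psi> p = (\<Sum>m<N - j. c (j + m) (T m p)) + g (T (N - j) p)" for p
  have "\<Psi> \<in> borel_measurable (borel \<Otimes>\<^sub>M PiM {j..<N} (\<lambda>_. borel))"
    unfolding \<Psi>_def by (intro borel_measurable_add borel_measurable_sum measurable_compose[OF T_meas]) auto
  moreover have "cost_to_go c g j \<omega> = \<Psi> (state j \<omega>, future_noise j \<omega>)" for \<omega>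
  proof -
    have state_future: "state (j + m) \<omega> = T m (state j \<omega>, future_noise j \<omega>)" if "m \<le> N - j" for m
      unfolding T_def state_seq_eq_em_path em_path_add using that by (simp, intro em_path_cong) auto
    have "(\<Sum>k\<in>{j..<N}. c k (state k \<omega>)) = (\<Sum>m<N - j. c (j + m) (state (j + m) \<omega>))"
      by (simp add: sum.atLeastLessThan_shift_0[of _ j N] atLeast0LessThan add.commute)
    then show ?thesis
      unfolding \<Psi>_def using state_future[of "N - j"] state_future \<open>j \<le> N\<close> by simp
  qed
  ultimately show ?thesis using that by blast
qed

text \<open>Since the future noise is independent of the past noise, conditioning the cost-to-go on
  the past integrates the future noise out and leaves a function of the current state.\<close>
lemma cond_exp_cost_to_go_past:
  assumes "j \<le> N" and c_meas: "\<And>k. c k \<in> borel_measurable borel"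
    and g_meas: "g \<in> borel_measurable borel" and int: "integrable M (cost_to_go c g j)"
  obtains \<phi> where "\<phi> \<in> borel_measurable borel"
    and "AE \<omega> in M. real_cond_exp M (past_noise_algebra j) (cost_to_go c g j) \<omega> = \<phi> (state j \<omega>)"
proof -
  obtain \<Psi> where [measurable]: "\<Psi> \<in> borel_measurable (borel \<Otimes>\<^sub>M PiM {j..<N} (\<lambda>_. borel))"
    and cost_eq: "\<And>\<omega>. cost_to_go c g j \<omega> = \<Psi> (state j \<omega>, future_noise j \<omega>)"
    using cost_to_go_future[where c = c, OF \<open>j \<le> N\<close> c_meas g_meas] by blast
  have indep: "indep_var (PiM {..<j} (\<lambda>_. borel)) (past_noise j) (PiM {j..<N} (\<lambda>_. borel)) (future_noise j)"
    using \<open>j \<le> N\<close> by (intro indep_var_restrict[OF noise_indep]) auto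
  have [measurable]: "future_noise j \<in> measurable M (PiM {j..<N} (\<lambda>_. borel))"
    using indep unfolding indep_var_distribution_eq by auto
  have [measurable]: "(\<lambda>w. em_path f \<sigma> \<mu> dt 0 x0 w j) \<in> borel_measurable (PiM {..<j} (\<lambda>_. borel))"
    by (rule em_path_past_measurable) simp
  define h where "h p = \<Psi> (em_path f \<sigma> \<mu> dt 0 x0 (fst p) j, snd p)" for p
  have h_meas: "h \<in> borel_measurable (PiM {..<j} (\<lambda>_. borel) \<Otimes>\<^sub>M PiM {j..<N} (\<lambda>_. borel))"
    unfolding h_def by measurable
  have h_eq: "h (past_noise j \<omega>, future_noise j \<omega>') = \<Psi> (state j \<omega>, future_noise j \<omega>')" for \<omega> \<omega>'
    by (simp add: h_def state_eq_em_path_past[OF order_refl])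
  show ?thesis
  proof
    show "(\<lambda>x. \<integral>\<omega>'. \<Psi> (x, future_noise j \<omega>') \<partial>M) \<in> borel_measurable borel" by measurable
    from real_cond_exp_indep_freeze[OF indep h_meas] int
    show "AE \<omega> in M. real_cond_exp M (past_noise_algebra j) (cost_to_go c g j) \<omega>
        = (\<integral>\<omega>'. \<Psi> (state j \<omega>, future_noise j \<omega>') \<partial>M)"
      by (simp add: h_eq cost_eq)
  qed
qed

lemma subalgebra_past_noise_algebra:
  assumes "k \<le> j" "j \<le> N"
  shows "subalgebra (past_noise_algebra j) (state_algebra k)"
  using sets_image_in_sets[OF _ state_measurable_past_noise_algebra[OF assms]] by (simp add: subalgebra_def)

lemma cond_exp_cost_to_go_markov:
  assumes "j \<le> N" and c_meas: "\<And>k. c k \<in> borel_measurable borel"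
    and g_meas: "g \<in> borel_measurable borel" and int: "integrable M (cost_to_go c g j)"
  shows "AE \<omega> in M. real_cond_exp M (state_algebra j) (cost_to_go c g j) \<omega>
                  = real_cond_exp M (past_noise_algebra j) (cost_to_go c g j) \<omega>"
proof -
  obtain \<phi> where \<phi>_meas [measurable]: "\<phi> \<in> borel_measurable borel"
    and past: "AE \<omega> in M. real_cond_exp M (past_noise_algebra j) (cost_to_go c g j) \<omega> = \<phi> (state j \<omega>)"
    by (rule cond_exp_cost_to_go_past[OF \<open>j \<le> N\<close> c_meas g_meas int])
  interpret Past: sigma_finite_subalgebra M "past_noise_algebra j"
    by (rule sigma_finite_subalgebra_vimage_algebra[OF past_noise_measurable[OF \<open>j \<le> N\<close>]])
  interpret Gj: sigma_finite_subalgebra M "state_algebra j"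
    by (rule sigma_finite_subalgebra_state_algebra[OF \<open>j \<le> N\<close>])
  have [measurable]: "state j \<in> borel_measurable M" by (rule state_measurable[OF \<open>j \<le> N\<close>])
  have int_\<phi>: "integrable M (\<lambda>\<omega>. \<phi> (state j \<omega>))"
    using integrable_cong_AE_imp[OF Past.real_cond_exp_int(1)[OF int] _ past] by simp
  have "AE \<omega> in M. real_cond_exp M (state_algebra j) (real_cond_exp M (past_noise_algebra j) (cost_to_go c g j)) \<omega>
                 = real_cond_exp M (state_algebra j) (\<lambda>\<omega>. \<phi> (state j \<omega>)) \<omega>"
    by (intro Gj.real_cond_exp_cong[OF past]) (auto intro: borel_measurable_cond_exp2)
  with Gj.real_cond_exp_nested_subalg[OF subalgebra_vimage_algebra[OF past_noise_measurable[OF \<open>j \<le> N\<close>]]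
      subalgebra_past_noise_algebra[OF order_refl \<open>j \<le> N\<close>] int]
    Gj.real_cond_exp_F_meas[OF int_\<phi> measurable_state_algebra[OF \<open>j \<le> N\<close> \<phi>_meas]] past
  show ?thesis by eventually_elim simp
qed

lemma cond_exp_cost_to_go_tower:
  assumes "i \<le> j" "j \<le> N" and c_meas: "\<And>k. c k \<in> borel_measurable borel"
    and g_meas: "g \<in> borel_measurable borel" and int: "integrable M (cost_to_go c g j)"
  shows "AE \<omega> in M. real_cond_exp M (state_algebra i) (real_cond_exp M (state_algebra j) (cost_to_go c g j)) \<omega>
                  = real_cond_exp M (state_algebra i) (cost_to_go c g j) \<omega>"
proof -
  interpret Gi: sigma_finite_subalgebra M "state_algebra i"
    using assms(1,2) by (intro sigma_finite_subalgebra_state_algebra) simp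
  have "AE \<omega> in M. real_cond_exp M (state_algebra i) (real_cond_exp M (state_algebra j) (cost_to_go c g j)) \<omega>
       = real_cond_exp M (state_algebra i) (real_cond_exp M (past_noise_algebra j) (cost_to_go c g j)) \<omega>"
    using cond_exp_cost_to_go_markov[OF \<open>j \<le> N\<close> c_meas g_meas int]
    by (intro Gi.real_cond_exp_cong) (auto intro: borel_measurable_cond_exp2)
  with Gi.real_cond_exp_nested_subalg[OF subalgebra_vimage_algebra[OF past_noise_measurable[OF \<open>j \<le> N\<close>]]
      subalgebra_past_noise_algebra[OF assms(1,2)] int]
  show ?thesis by eventually_elim simp
qed

lemma cond_exp_cost_to_go_step:
  assumes "i < N" and c_meas: "c i \<in> borel_measurable borel"
    and int: "integrable M (cost_to_go c g i)" "integrable M (cost_to_go c g (Suc i))"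
  shows "AE \<omega> in M. real_cond_exp M (state_algebra i) (cost_to_go c g i) \<omega>
                  = c i (state i \<omega>) + real_cond_exp M (state_algebra i) (cost_to_go c g (Suc i)) \<omega>"
proof -
  interpret Gi: sigma_finite_subalgebra M "state_algebra i"
    using \<open>i < N\<close> by (intro sigma_finite_subalgebra_state_algebra) simp
  have split: "cost_to_go c g i \<omega> = c i (state i \<omega>) + cost_to_go c g (Suc i) \<omega>" for \<omega>
    using \<open>i < N\<close> by (simp add: sum.atLeast_Suc_lessThan)
  have int_c: "integrable M (\<lambda>\<omega>. c i (state i \<omega>))"
    using Bochner_Integration.integrable_diff[OF int] by (simp add: split)
  have "AE \<omega> in M. real_cond_exp M (state_algebra i) (\<lambda>\<omega>. c i (state i \<omega>) + cost_to_go c g (Suc i) \<omega>) \<omega>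
                  = c i (state i \<omega>) + real_cond_exp M (state_algebra i) (cost_to_go c g (Suc i)) \<omega>"
    using Gi.real_cond_exp_add[OF int_c int(2)]
      Gi.real_cond_exp_F_meas[OF int_c measurable_state_algebra[OF _ c_meas]] \<open>i < N\<close>
    by (auto elim: eventually_mono)
  then show ?thesis by (simp add: split)
qed

lemma cond_exp_backward_step:
  fixes i :: nat and c :: "nat \<Rightarrow> real^'n \<Rightarrow> real" and z :: "real^'n \<Rightarrow> real^'n" and A :: "real^'n \<Rightarrow> real^'n^'n"
  defines "D \<equiv> \<lambda>\<omega>. - c i (state i \<omega>) + z (state i \<omega>) \<bullet> W i \<omega>
                   + 1/2 * trace (A (state i \<omega>) ** (outer (W i \<omega>) (W i \<omega>) - mat 1))"
  assumes "i < N" and c_meas [measurable]: "\<And>k. c k \<in> borel_measurable borel"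
    and g_meas [measurable]: "g \<in> borel_measurable borel"
    and z_meas [measurable]: "z \<in> borel_measurable borel"
    and A_meas [measurable]: "A \<in> borel_measurable borel"
    and indep: "indep_vars (\<lambda>_. borel) (\<lambda>k \<omega>. W i \<omega> $ k) UNIV"
    and std: "\<And>k. distributed M lborel (\<lambda>\<omega>. W i \<omega> $ k) (\<lambda>x. ennreal (std_normal_density x))"
    and int: "integrable M (cost_to_go c g i)" "integrable M (cost_to_go c g (Suc i))" "integrable M D"
  shows "AE \<omega> in M. real_cond_exp M (state_algebra i) (cost_to_go c g i) \<omega>
     = real_cond_exp M (state_algebra i)
         (\<lambda>\<omega>. real_cond_exp M (state_algebra (Suc i)) (cost_to_go c g (Suc i)) \<omega> - D \<omega>) \<omega>"
proof -
  interpret Gi: sigma_finite_subalgebra M "state_algebra i"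
    using \<open>i < N\<close> by (intro sigma_finite_subalgebra_state_algebra) simp
  interpret Gs: sigma_finite_subalgebra M "state_algebra (Suc i)"
    using \<open>i < N\<close> by (intro sigma_finite_subalgebra_state_algebra) simp
  define I where "I \<omega> = z (state i \<omega>) \<bullet> W i \<omega>
                   + 1/2 * trace (A (state i \<omega>) ** (outer (W i \<omega>) (W i \<omega>) - mat 1))" for \<omega>
  have int_c: "integrable M (\<lambda>\<omega>. c i (state i \<omega>))"
    using Bochner_Integration.integrable_diff[OF int(1,2)] \<open>i < N\<close> by (simp add: sum.atLeast_Suc_lessThan)
  have D_eq: "D = (\<lambda>\<omega>. - c i (state i \<omega>) + I \<omega>)" by (simp add: D_def I_def fun_eq_iff)
  have int_I: "integrable M I"
    using Bochner_Integration.integrable_add[OF int(3) int_c] by (simp add: D_eq)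
  have "AE \<omega> in M. real_cond_exp M (state_algebra i) I \<omega> = 0"
    unfolding I_def by (rule cond_exp_ito_correction[OF \<open>i < N\<close> z_meas A_meas indep std int_I[unfolded I_def]])
  then have "AE \<omega> in M. real_cond_exp M (state_algebra i) D \<omega> = - c i (state i \<omega>)"
    using Gi.real_cond_exp_add[OF integrable_minus[OF int_c] int_I]
      Gi.real_cond_exp_F_meas[OF integrable_minus[OF int_c]
        borel_measurable_uminus[OF measurable_state_algebra[OF _ c_meas]]] \<open>i < N\<close>
    unfolding D_eq by (auto elim: eventually_mono)
  moreover have "AE \<omega> in M. real_cond_exp M (state_algebra i)
      (\<lambda>\<omega>. real_cond_exp M (state_algebra (Suc i)) (cost_to_go c g (Suc i)) \<omega> - D \<omega>) \<omega>
      = real_cond_exp M (state_algebra i) (real_cond_exp M (state_algebra (Suc i)) (cost_to_go c g (Suc i))) \<omega>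
        - real_cond_exp M (state_algebra i) D \<omega>"
    by (rule Gi.real_cond_exp_diff[OF Gs.real_cond_exp_int(1)[OF int(2)] int(3)])
  ultimately show ?thesis
    using cond_exp_cost_to_go_tower[OF lessI[THEN less_imp_le] Suc_leI[OF \<open>i < N\<close>] c_meas g_meas int(2)]
      cond_exp_cost_to_go_step[OF \<open>i < N\<close> c_meas int(1,2)]
    by eventually_elim simp
qed

end

theorem theorem3p2:
  fixes M :: "'a measure" and dt :: real and N i :: nat and U :: "(real^'m) set"
    and f :: "real \<Rightarrow> real^'n \<Rightarrow> real^'m \<Rightarrow> real^'n"
    and \<sigma> :: "real \<Rightarrow> real^'n \<Rightarrow> real^'n^'n"
    and ell :: "real \<Rightarrow> real^'n \<Rightarrow> real^'m \<Rightarrow> real"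
    and g :: "real^'n \<Rightarrow> real"
    and \<mu> :: "nat \<Rightarrow> real^'n \<Rightarrow> real^'m"
    and x0 :: "real^'n" and W :: "nat \<Rightarrow> 'a \<Rightarrow> real^'n"
    and Vt :: "real^'n \<Rightarrow> real" and DVt :: "real^'n \<Rightarrow> real^'n"
    and D2Vt :: "real^'n \<Rightarrow> real^'n^'n"
  defines "X \<equiv> state_seq f \<sigma> \<mu> dt x0 W"
  defines "L \<equiv> \<lambda>j \<omega>. ell (real j * dt) (X j \<omega>) (\<mu> j (X j \<omega>)) * dt"
  defines "S \<equiv> \<lambda>j \<omega>. (\<Sum>k\<in>{j..<N}. L k \<omega>) + g (X N \<omega>)"
  defines "G \<equiv> \<lambda>j. vimage_algebra (space M) (X j) borel"
  defines "Y \<equiv> \<lambda>j. real_cond_exp M (G j) (S j)"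
  defines "F \<equiv> \<lambda>\<omega>. dt *\<^sub>R f (real i * dt) (X i \<omega>) (\<mu> i (X i \<omega>))"
  defines "Sig \<equiv> \<lambda>\<omega>. sqrt dt *\<^sub>R \<sigma> (real i * dt) (X i \<omega>)"
  defines "Xbar \<equiv> \<lambda>\<omega>. X i \<omega> + F \<omega>"
  defines "Ybar \<equiv> \<lambda>\<omega>. Vt (Xbar \<omega>)"
  defines "Zbar \<equiv> \<lambda>\<omega>. transpose (Sig \<omega>) *v DVt (Xbar \<omega>)"
  defines "Mbar \<equiv> \<lambda>\<omega>. transpose (Sig \<omega>) ** D2Vt (Xbar \<omega>) ** Sig \<omega>"
  defines "Ytil \<equiv> \<lambda>\<omega>. Ybar \<omega> + Zbar \<omega> \<bullet> W i \<omega> + 1/2 * (W i \<omega> \<bullet> (Mbar \<omega> *v W i \<omega>))"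
  defines "dhot \<equiv> \<lambda>\<omega>. Vt (X (Suc i) \<omega>) - Ytil \<omega>"
  defines "dV \<equiv> \<lambda>\<omega>. Y (Suc i) \<omega> - Vt (X (Suc i) \<omega>)"
  defines "DY \<equiv> \<lambda>\<omega>. - L i \<omega> + Zbar \<omega> \<bullet> W i \<omega>
                 + 1/2 * trace (Mbar \<omega> ** (outer (W i \<omega>) (W i \<omega>) - mat 1))"
  defines "Yre \<equiv> \<lambda>\<omega>. Vt (X (Suc i) \<omega>) - DY \<omega>"
  defines "Ynl \<equiv> \<lambda>\<omega>. Ytil \<omega> - DY \<omega>"
  assumes P: "prob_space M"
    and dt_pos: "dt > 0" and i_lt: "i < N"
    and mu_U: "\<forall>j x. \<mu> j x \<in> U"
    and l_nonneg: "\<forall>t\<in>{0..real N * dt}. \<forall>x. \<forall>u\<in>U. 0 \<le> ell t x u"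
    and g_nonneg: "\<forall>x. 0 \<le> g x"
    and f_meas: "(\<lambda>(t, x, u). f t x u) \<in> borel_measurable borel"
    and sigma_meas: "(\<lambda>(t, x). \<sigma> t x) \<in> borel_measurable borel"
    and l_meas: "(\<lambda>(t, x, u). ell t x u) \<in> borel_measurable borel"
    and g_meas: "g \<in> borel_measurable borel"
    and mu_meas: "\<forall>j. \<mu> j \<in> borel_measurable borel"
    and W_indep: "prob_space.indep_vars M (\<lambda>_. borel) W {..<N}"
    and W_comp_indep: "\<forall>j<N. prob_space.indep_vars M (\<lambda>_. borel) (\<lambda>k \<omega>. W j \<omega> $ k) UNIV"
    and W_gauss: "\<forall>j<N. \<forall>k. distributed M lborel (\<lambda>\<omega>. W j \<omega> $ k) (\<lambda>x. ennreal (std_normal_density x))"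
    and Vt_D1: "\<forall>x. (Vt has_derivative (\<lambda>h. DVt x \<bullet> h)) (at x)"
    and Vt_D2: "\<forall>x. (DVt has_derivative (\<lambda>h. D2Vt x *v h)) (at x)"
    and Vt_C2: "continuous_on UNIV D2Vt"
    and sq_S: "\<forall>j\<le>N. square_integrable M (S j)"
    and sq_Vt: "square_integrable M (\<lambda>\<omega>. Vt (X (Suc i) \<omega>))"
    and sq_Ytil: "square_integrable M Ytil"
    and sq_DY: "square_integrable M DY"
  shows "(AE \<omega> in M. real_cond_exp M (G i) (\<lambda>\<omega>. Y i \<omega> - Yre \<omega>) \<omega>
                    = real_cond_exp M (G i) dV \<omega>)
       \<and> (AE \<omega> in M. real_cond_exp M (G i) (\<lambda>\<omega>. Y i \<omega> - Ynl \<omega>) \<omega>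
                    = real_cond_exp M (G i) (\<lambda>\<omega>. dV \<omega> + dhot \<omega>) \<omega>)
       \<and> (AE \<omega> in M. cond_var M (G i) Yre \<omega> = cond_var M (G i) dhot \<omega>)
       \<and> (AE \<omega> in M. cond_var M (G i) Ynl \<omega> = 0)"
proof -
  interpret euler_maruyama M f \<sigma> \<mu> dt x0 W N
    using P f_meas sigma_meas mu_meas W_indep by (simp add: euler_maruyama_def euler_maruyama_axioms_def)
  interpret Gi: sigma_finite_subalgebra M "G i"
    unfolding G_def X_def using i_lt by (intro sigma_finite_subalgebra_state_algebra) simp
  interpret Gs: sigma_finite_subalgebra M "G (Suc i)"
    unfolding G_def X_def using i_lt by (intro sigma_finite_subalgebra_state_algebra) simp
  note [measurable] = borel_measurable_compose_curried3[OF l_meas]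
    borel_measurable_has_derivative[OF Vt_D1[rule_format]]
    borel_measurable_has_derivative[OF Vt_D2[rule_format]] borel_measurable_continuous_onI[OF Vt_C2]
  define c where "c j x = ell (real j * dt) x (\<mu> j x) * dt" for j x
  define xbar where "xbar x = x + dt *\<^sub>R f (real i * dt) x (\<mu> i x)" for x
  define sg where "sg x = sqrt dt *\<^sub>R \<sigma> (real i * dt) x" for x
  define z where "z x = transpose (sg x) *v DVt (xbar x)" for x
  define A where "A x = transpose (sg x) ** D2Vt (xbar x) ** sg x" for x
  have c_meas [measurable]: "\<And>j. c j \<in> borel_measurable borel" unfolding c_def by measurable
  have [measurable]: "xbar \<in> borel_measurable borel" "sg \<in> borel_measurable borel"
    unfolding xbar_def sg_def by measurable
  have z_meas [measurable]: "z \<in> borel_measurable borel"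
    and A_meas [measurable]: "A \<in> borel_measurable borel"
    unfolding z_def A_def by measurable
  have S_eq: "S j = (\<lambda>\<omega>. (\<Sum>k\<in>{j..<N}. c k (X k \<omega>)) + g (X N \<omega>))" for j
    by (simp add: S_def L_def c_def)
  have DY_eq: "DY = (\<lambda>\<omega>. - c i (X i \<omega>) + z (X i \<omega>) \<bullet> W i \<omega>
                 + 1/2 * trace (A (X i \<omega>) ** (outer (W i \<omega>) (W i \<omega>) - mat 1)))"
    by (simp add: DY_def L_def c_def z_def A_def Zbar_def Mbar_def Sig_def sg_def Xbar_def xbar_def F_def)
  have Ynl_eq: "Ynl = (\<lambda>\<omega>. Vt (xbar (X i \<omega>)) + c i (X i \<omega>) + 1/2 * trace (A (X i \<omega>)))"
    by (simp add: Ynl_def Ytil_def DY_eq Ybar_def Zbar_def Mbar_def z_def A_def Sig_def sg_def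
        Xbar_def xbar_def F_def inner_matrix_vector_mult_eq_trace_outer fun_eq_iff algebra_simps)
  have int: "integrable M (S i)" "integrable M (S (Suc i))" "integrable M (\<lambda>\<omega>. Vt (X (Suc i) \<omega>))"
    "integrable M Ytil" "integrable M DY"
    using sq_S sq_Vt sq_Ytil sq_DY i_lt by (simp_all add: square_integrable_imp_integrable)
  have backward: "AE \<omega> in M. Y i \<omega> = real_cond_exp M (G i) (\<lambda>\<omega>. Y (Suc i) \<omega> - DY \<omega>) \<omega>"
    unfolding Y_def G_def S_eq DY_eq X_def
    by (rule cond_exp_backward_step[OF i_lt c_meas g_meas z_meas A_meas])
      (use W_comp_indep W_gauss i_lt int in \<open>auto simp: S_eq DY_eq X_def\<close>)
  have noiseless_G: "(\<lambda>\<omega>. Ytil \<omega> - DY \<omega>) \<in> borel_measurable (G i)"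
    using i_lt unfolding Ynl_def[symmetric] Ynl_eq G_def X_def by (intro measurable_state_algebra) measurable
  show ?thesis
    unfolding Yre_def Ynl_def dV_def dhot_def
    using Gi.estimator_bias_variance[where V = "\<lambda>\<omega>. Vt (X (Suc i) \<omega>)",
        OF _ _ _ int(3-5) backward noiseless_G]
      Gi.real_cond_exp_int(1)[OF int(1)] Gs.real_cond_exp_int(1)[OF int(2)]
    by (simp add: Y_def borel_measurable_cond_exp)
qed

end
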